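(* Let $X,Y$ be finitely supported subsets of invariant sets. (1) $X$ is FSM Dedekind infinite if and only if there exists a finitely supported injective map $\mathbb N\to X$ (with $\mathbb N$ carrying the trivial action). (4) If $X$ contains no infinite uniformly supported subset, then $X$ is not FSM Dedekind infinite. (6) If neither $X$ nor $Y$ is FSM Dedekind infinite, then $X\times Y$ is not FSM Dedekind infinite. (7) If neither $X$ nor $Y$ is FSM Dedekind infinite, then $X+Y$ is not FSM Dedekind infinite.
   Context: Framework (FSM). Work in ZF with a fixed infinite set $A$ of atoms; $S_A$ is the group of bijections of $A$ fixing all but finitely many atoms; $Fix(S)$ is the set of $\pi\in S_A$ fixing each element of $S\subseteq A$; $S$ supports $x$ if $\pi\cdot x=x$ for all $\pi\in Fix(S)$. An invariant set is an $S_A$-set all of whose elements have finite supports; subsets carry $\pi\star Z=\{\pi\cdot z:z\in Z\}$ and a subset is finitely supported if it has a finite support under this action. Ordinary sets such as $\mathbb N$ carry the trivial action. Products carry $\pi\cdot(x,y)=(\pi\cdot x,\pi\cdot y)$; $X+Y=\{(0,x):x\in X\}\cup\{(1,y):y\in Y\}$ with $\pi\cdot(i,z)=(i,\pi\cdot z)$. A function is finitely supported if there is a finite $S$ such that for all $\pi\in Fix(S)$ and $x$ in the domain, $\pi$ preserves domain and codomain and $f(\pi\cdot x)=\pi\cdot f(x)$. A subset is uniformly supported if all its elements are supported by one common finite set of atoms. $X$ is FSM Dedekind infinite if there is a finitely supported injection from $X$ onto a finitely supported proper subset of $X$. *)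

theory Defs
  imports Main
begin

text \<open>Atoms are the elements of a type 'a (assumed infinite in the theorem).
  S_A: bijections of the atoms fixing all but finitely many atoms.\<close>

definition SA :: "('a \<Rightarrow> 'a) set" where
  "SA = {\<pi>. bij \<pi> \<and> finite {a. \<pi> a \<noteq> a}}"

definition Fix :: "'a set \<Rightarrow> ('a \<Rightarrow> 'a) set" where
  "Fix S = {\<pi> \<in> SA. \<forall>a\<in>S. \<pi> a = a}"

definition SA_set :: "(('a \<Rightarrow> 'a) \<Rightarrow> 'x \<Rightarrow> 'x) \<Rightarrow> 'x set \<Rightarrow> bool" where
  "SA_set act U \<longleftrightarrow>
     (\<forall>\<pi>\<in>SA. \<forall>x\<in>U. act \<pi> x \<in> U) \<and>
     (\<forall>x\<in>U. act id x = x) \<and>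
     (\<forall>\<pi>\<in>SA. \<forall>\<sigma>\<in>SA. \<forall>x\<in>U. act (\<pi> \<circ> \<sigma>) x = act \<pi> (act \<sigma> x))"

definition supports :: "(('a \<Rightarrow> 'a) \<Rightarrow> 'x \<Rightarrow> 'x) \<Rightarrow> 'a set \<Rightarrow> 'x \<Rightarrow> bool" where
  "supports act S x \<longleftrightarrow> (\<forall>\<pi>\<in>Fix S. act \<pi> x = x)"

definition fin_supp :: "(('a \<Rightarrow> 'a) \<Rightarrow> 'x \<Rightarrow> 'x) \<Rightarrow> 'x \<Rightarrow> bool" where
  "fin_supp act x \<longleftrightarrow> (\<exists>S. finite S \<and> supports act S x)"

definition invariant_set :: "(('a \<Rightarrow> 'a) \<Rightarrow> 'x \<Rightarrow> 'x) \<Rightarrow> 'x set \<Rightarrow> bool" where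
  "invariant_set act U \<longleftrightarrow> SA_set act U \<and> (\<forall>x\<in>U. fin_supp act x)"

definition fs_subset :: "(('a \<Rightarrow> 'a) \<Rightarrow> 'x \<Rightarrow> 'x) \<Rightarrow> 'x set \<Rightarrow> bool" where
  "fs_subset act X \<longleftrightarrow> (\<exists>S. finite S \<and> (\<forall>\<pi>\<in>Fix S. act \<pi> ` X = X))"

definition fs_fun :: "(('a \<Rightarrow> 'a) \<Rightarrow> 'x \<Rightarrow> 'x) \<Rightarrow> 'x set \<Rightarrow>
    (('a \<Rightarrow> 'a) \<Rightarrow> 'y \<Rightarrow> 'y) \<Rightarrow> 'y set \<Rightarrow> ('x \<Rightarrow> 'y) \<Rightarrow> bool" where
  "fs_fun actX X actY Y f \<longleftrightarrow> f ` X \<subseteq> Y \<and>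
     (\<exists>S. finite S \<and> (\<forall>\<pi>\<in>Fix S. actX \<pi> ` X = X \<and> actY \<pi> ` Y = Y \<and>
        (\<forall>x\<in>X. f (actX \<pi> x) = actY \<pi> (f x))))"

definition uniformly_supported :: "(('a \<Rightarrow> 'a) \<Rightarrow> 'x \<Rightarrow> 'x) \<Rightarrow> 'x set \<Rightarrow> bool" where
  "uniformly_supported act Z \<longleftrightarrow> (\<exists>S. finite S \<and> (\<forall>z\<in>Z. supports act S z))"

definition FSM_dedekind_infinite :: "(('a \<Rightarrow> 'a) \<Rightarrow> 'x \<Rightarrow> 'x) \<Rightarrow> 'x set \<Rightarrow> bool" where
  "FSM_dedekind_infinite act X \<longleftrightarrow>
     (\<exists>f Z. fs_subset act Z \<and> Z \<subset> X \<and> bij_betw f X Z \<and> fs_fun act X act Z f)"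

definition triv_act :: "('a \<Rightarrow> 'a) \<Rightarrow> 'n \<Rightarrow> 'n" where
  "triv_act \<pi> n = n"

definition prod_act :: "(('a \<Rightarrow> 'a) \<Rightarrow> 'x \<Rightarrow> 'x) \<Rightarrow> (('a \<Rightarrow> 'a) \<Rightarrow> 'y \<Rightarrow> 'y) \<Rightarrow>
    ('a \<Rightarrow> 'a) \<Rightarrow> 'x \<times> 'y \<Rightarrow> 'x \<times> 'y" where
  "prod_act actX actY \<pi> p = (actX \<pi> (fst p), actY \<pi> (snd p))"

text \<open>Disjoint union X+Y rendered with the HOL sum type (Inl = tag 0, Inr = tag 1).\<close>
definition sum_act :: "(('a \<Rightarrow> 'a) \<Rightarrow> 'x \<Rightarrow> 'x) \<Rightarrow> (('a \<Rightarrow> 'a) \<Rightarrow> 'y \<Rightarrow> 'y) \<Rightarrow>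
    ('a \<Rightarrow> 'a) \<Rightarrow> 'x + 'y \<Rightarrow> 'x + 'y" where
  "sum_act actX actY \<pi> s = map_sum (actX \<pi>) (actY \<pi>) s"

end

theory Submission
  imports Defs "HOL-Library.Infinite_Set"
begin

text \<open>A finitely supported map from \<open>\<nat>\<close> (trivial action) into \<open>X\<close> is just a sequence in \<open>X\<close>
  whose terms share one finite support; so for a finitely supported \<open>X\<close>, FSM Dedekind infinity
  amounts to having an infinite uniformly supported subset. If \<open>g : X \<rightarrow> Z \<subset> X\<close> is an equivariant
  bijection, iterating \<open>g\<close> on a point outside \<open>Z\<close> gives an injective sequence supported by the
  supports of \<open>g\<close> and of that point. Conversely, moving each term of a uniformly supported
  injective sequence one step forward and fixing everything else is an equivariant bijection of
  \<open>X\<close> onto \<open>X\<close> minus the first term. An infinite uniformly supported subset of \<open>X \<times> Y\<close> or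
  \<open>X + Y\<close> has an infinite, uniformly supported projection to \<open>X\<close> or to \<open>Y\<close>.\<close>

abbreviation has_infinite_uniform_subset :: "(('a \<Rightarrow> 'a) \<Rightarrow> 'x \<Rightarrow> 'x) \<Rightarrow> 'x set \<Rightarrow> bool" where
  "has_infinite_uniform_subset act X \<equiv> \<exists>Z. Z \<subseteq> X \<and> infinite Z \<and> uniformly_supported act Z"

lemma Fix_Un: "Fix (S \<union> T) = Fix S \<inter> Fix T"
  by (auto simp: Fix_def)

lemma inv_in_SA:
  assumes "\<pi> \<in> SA"
  shows "inv \<pi> \<in> SA"
proof -
  have "bij \<pi>" "finite {a. \<pi> a \<noteq> a}"
    using assms by (simp_all add: SA_def)
  moreover have "inv \<pi> a = a \<longleftrightarrow> \<pi> a = a" for a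
    using bij_inv_eq_iff[OF \<open>bij \<pi>\<close>, of a a] by auto
  ultimately show ?thesis
    by (simp add: SA_def bij_imp_bij_inv)
qed

lemma SA_set_inj_on:
  assumes "SA_set act U" "\<pi> \<in> SA"
  shows "inj_on (act \<pi>) U"
proof (rule inj_on_inverseI)
  fix x assume "x \<in> U"
  moreover have "inv \<pi> \<circ> \<pi> = id"
    using \<open>\<pi> \<in> SA\<close> by (simp add: SA_def bij_is_inj)
  ultimately show "act (inv \<pi>) (act \<pi> x) = x"
    using assms inv_in_SA unfolding SA_set_def by metis
qed

lemma uniformly_supported_subset:
  "uniformly_supported act Z \<Longrightarrow> Z' \<subseteq> Z \<Longrightarrow> uniformly_supported act Z'"
  unfolding uniformly_supported_def by blast

lemma fs_fun_from_nat_iff: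
  "fs_fun triv_act UNIV act X f \<longleftrightarrow>
     range f \<subseteq> X \<and> fs_subset act X \<and> uniformly_supported act (range f)"
proof
  assume "fs_fun triv_act UNIV act X f"
  then obtain S where "range f \<subseteq> X" "finite S"
    and S: "\<forall>\<pi>\<in>Fix S. act \<pi> ` X = X \<and> (\<forall>n. f n = act \<pi> (f n))"
    unfolding fs_fun_def triv_act_def by blast
  then show "range f \<subseteq> X \<and> fs_subset act X \<and> uniformly_supported act (range f)"
    unfolding fs_subset_def uniformly_supported_def supports_def by (auto intro!: exI[of _ S])
next
  assume "range f \<subseteq> X \<and> fs_subset act X \<and> uniformly_supported act (range f)"
  then obtain S T where "range f \<subseteq> X" "finite S" "finite T"
    and "\<forall>\<pi>\<in>Fix S. act \<pi> ` X = X" "\<forall>\<pi>\<in>Fix T. \<forall>n. act \<pi> (f n) = f n"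
    unfolding fs_subset_def uniformly_supported_def supports_def by blast
  then show "fs_fun triv_act UNIV act X f"
    unfolding fs_fun_def triv_act_def by (intro conjI exI[of _ "S \<union> T"]) (auto simp: Fix_Un)
qed

lemma funpow_mem: "g ` X \<subseteq> X \<Longrightarrow> x \<in> X \<Longrightarrow> (g ^^ n) x \<in> X"
  by (induction n) auto

lemma inj_funpow_outside_image:
  assumes g: "inj_on g X" "g ` X \<subseteq> X" and x: "x \<in> X" "x \<notin> g ` X"
  shows "inj (\<lambda>n. (g ^^ n) x)"
proof (rule injI)
  have mem: "(g ^^ n) x \<in> X" for n
    using funpow_mem g(2) x(1) .
  have no_return: "(g ^^ Suc k) x \<noteq> x" for k
    using mem[of k] x(2) by (metis comp_apply funpow.simps(2) image_eqI)
  show "m = n" if "(g ^^ m) x = (g ^^ n) x" for m n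
    using that
  proof (induction m arbitrary: n)
    case 0
    then show ?case using no_return[THEN not_sym] by (cases n) auto
  next
    case (Suc m)
    then show ?case using mem no_return g(1) by (cases n) (auto simp: inj_on_eq_iff)
  qed
qed

definition shift_along :: "(nat \<Rightarrow> 'x) \<Rightarrow> 'x \<Rightarrow> 'x" where
  "shift_along f x = (if x \<in> range f then f (Suc (inv f x)) else x)"

lemma shift_along_apply: "inj f \<Longrightarrow> shift_along f (f n) = f (Suc n)"
  by (simp add: shift_along_def)

lemma shift_along_outside: "x \<notin> range f \<Longrightarrow> shift_along f x = x"
  by (simp add: shift_along_def)

lemma shift_along_in_range_iff: "shift_along f x \<in> range f \<longleftrightarrow> x \<in> range f"
  by (simp add: shift_along_def)

lemma bij_betw_shift_along:
  assumes f: "inj f" "range f \<subseteq> X"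
  shows "bij_betw (shift_along f) X (X - {f 0})"
proof (rule bij_betw_imageI)
  show "inj_on (shift_along f) X"
  proof (rule inj_onI)
    fix x y assume eq: "shift_along f x = shift_along f y"
    show "x = y"
    proof (cases "x \<in> range f")
      case True
      then obtain n m where "x = f n" "y = f m"
        using eq shift_along_in_range_iff by (metis rangeE)
      then show ?thesis
        using eq f(1) by (simp add: shift_along_apply inj_eq)
    next
      case False
      then have "y \<notin> range f"
        using eq shift_along_in_range_iff by metis
      then show ?thesis
        using False eq by (simp add: shift_along_outside)
    qed
  qed
  show "shift_along f ` X = X - {f 0}"
  proof (intro equalityI subsetI)
    fix y assume "y \<in> shift_along f ` X"
    then obtain x where x: "x \<in> X" "y = shift_along f x"
      by blast
    show "y \<in> X - {f 0}"
    proof (cases "x \<in> range f")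
      case True
      then show ?thesis
        using x f by (auto simp: shift_along_apply inj_eq)
    next
      case False
      then show ?thesis
        using x by (auto simp: shift_along_outside)
    qed
  next
    fix y assume y: "y \<in> X - {f 0}"
    show "y \<in> shift_along f ` X"
    proof (cases "y \<in> range f")
      case True
      then obtain n where "y = f (Suc n)"
        using y by (metis DiffE insertI1 not0_implies_Suc rangeE)
      then have "y = shift_along f (f n)"
        using f(1) by (simp add: shift_along_apply)
      then show ?thesis
        using f(2) by (intro rev_image_eqI[of "f n"]) auto
    next
      case False
      then show ?thesis
        using y by (intro rev_image_eqI[of y]) (auto simp: shift_along_outside)
    qed
  qed
qed

lemma shift_along_commute:
  assumes h: "inj_on h U" "\<And>n. h (f n) = f n" and f: "inj f" "range f \<subseteq> U" and x: "x \<in> U"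
  shows "shift_along f (h x) = h (shift_along f x)"
proof (cases "x \<in> range f")
  case True
  then show ?thesis
    using h(2) f(1) by (auto simp: shift_along_apply)
next
  case False
  have "h x \<notin> range f"
  proof
    assume "h x \<in> range f"
    then obtain n where "h x = h (f n)"
      using h(2) by (metis rangeE)
    then show False
      using False h(1) f(2) x by (metis inj_on_eq_iff rangeI subsetD)
  qed
  then show ?thesis
    using False shift_along_outside by metis
qed

lemma FSM_dedekind_infinite_imp_fs_inj_from_nat:
  assumes fin: "\<forall>x\<in>X. fin_supp act x" and DI: "FSM_dedekind_infinite act X"
  shows "\<exists>f :: nat \<Rightarrow> 'x. inj f \<and> fs_fun triv_act UNIV act X f"
proof -
  obtain g Z where "Z \<subset> X" "bij_betw g X Z" "fs_fun act X act Z g"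
    using DI unfolding FSM_dedekind_infinite_def by blast
  then obtain S where "finite S"
    and S: "\<forall>\<pi>\<in>Fix S. act \<pi> ` X = X \<and> act \<pi> ` Z = Z \<and> (\<forall>x\<in>X. g (act \<pi> x) = act \<pi> (g x))"
    unfolding fs_fun_def by blast
  have g: "inj_on g X" "g ` X \<subseteq> X" and "g ` X = Z"
    using \<open>bij_betw g X Z\<close> \<open>Z \<subset> X\<close> by (auto simp: bij_betw_def)
  obtain x0 where x0: "x0 \<in> X" "x0 \<notin> g ` X"
    using \<open>Z \<subset> X\<close> \<open>g ` X = Z\<close> by blast
  obtain S0 where "finite S0" and S0: "supports act S0 x0"
    using fin x0(1) unfolding fin_supp_def by blast
  define f where "f n = (g ^^ n) x0" for n
  have "inj f"
    unfolding f_def using inj_funpow_outside_image[OF g x0] .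
  have fX: "range f \<subseteq> X"
    unfolding f_def using funpow_mem[OF g(2) x0(1)] by blast
  have "act \<pi> (f n) = f n" if "\<pi> \<in> Fix (S \<union> S0)" for \<pi> n
  proof (induction n)
    case 0
    show ?case using S0 that by (simp add: f_def supports_def Fix_Un)
  next
    case (Suc n)
    have "\<pi> \<in> Fix S" "f n \<in> X"
      using that fX by (auto simp: Fix_Un)
    then have "g (act \<pi> (f n)) = act \<pi> (g (f n))"
      using S by blast
    then show ?case
      using Suc by (simp add: f_def)
  qed
  then have "uniformly_supported act (range f)"
    unfolding uniformly_supported_def supports_def
    using \<open>finite S\<close> \<open>finite S0\<close> by (intro exI[of _ "S \<union> S0"]) auto
  moreover have "fs_subset act X"
    unfolding fs_subset_def using S \<open>finite S\<close> by (intro exI[of _ S]) simp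
  ultimately have "fs_fun triv_act UNIV act X f"
    using fX by (simp add: fs_fun_from_nat_iff)
  with \<open>inj f\<close> show ?thesis
    by (intro exI[of _ f] conjI)
qed

lemma fs_inj_from_nat_imp_FSM_dedekind_infinite:
  fixes f :: "nat \<Rightarrow> 'x"
  assumes U: "SA_set act U" "X \<subseteq> U" and f: "inj f" "fs_fun triv_act UNIV act X f"
  shows "FSM_dedekind_infinite act X"
proof -
  obtain S where "finite S" and S: "\<forall>\<pi>\<in>Fix S. act \<pi> ` X = X \<and> (\<forall>n. act \<pi> (f n) = f n)"
    using f(2) unfolding fs_fun_def triv_act_def by (metis UNIV_I)
  have fX: "range f \<subseteq> X"
    using f(2) by (simp add: fs_fun_def)
  have inj_act: "inj_on (act \<pi>) U" if "\<pi> \<in> Fix S" for \<pi>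
    using SA_set_inj_on[OF U(1)] that by (simp add: Fix_def)
  have fix_f: "act \<pi> (f n) = f n" if "\<pi> \<in> Fix S" for \<pi> n
    using S that by blast
  have commute: "shift_along f (act \<pi> x) = act \<pi> (shift_along f x)" if "\<pi> \<in> Fix S" "x \<in> X" for \<pi> x
    using shift_along_commute[OF inj_act[OF that(1)] fix_f[OF that(1)] f(1)] fX U(2) that(2) by blast
  have Z_inv: "act \<pi> ` (X - {f 0}) = X - {f 0}" if "\<pi> \<in> Fix S" for \<pi>
  proof -
    have "act \<pi> ` (X - {f 0}) = act \<pi> ` X - {act \<pi> (f 0)}"
      using inj_on_image_set_diff[OF inj_act[OF that], of X "{f 0}"] fX U(2) by auto
    also have "\<dots> = X - {f 0}"
      using S that by simp
    finally show ?thesis .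
  qed
  have bij: "bij_betw (shift_along f) X (X - {f 0})"
    using bij_betw_shift_along[OF f(1) fX] .
  show ?thesis
    unfolding FSM_dedekind_infinite_def
  proof (intro exI[of _ "shift_along f"] exI[of _ "X - {f 0}"] conjI)
    show "fs_subset act (X - {f 0})"
      unfolding fs_subset_def using \<open>finite S\<close> Z_inv by blast
    show "X - {f 0} \<subset> X"
      using fX by auto
    show "fs_fun act X act (X - {f 0}) (shift_along f)"
      unfolding fs_fun_def
    proof (intro conjI exI[of _ S] ballI)
      show "shift_along f ` X \<subseteq> X - {f 0}"
        using bij by (simp add: bij_betw_def)
      show "act \<pi> ` X = X" if "\<pi> \<in> Fix S" for \<pi>
        using S that by blast
    qed (use \<open>finite S\<close> Z_inv commute in auto)
  qed (fact bij)
qed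

lemma FSM_dedekind_infinite_imp_infinite_uniform_subset:
  assumes "\<forall>x\<in>X. fin_supp act x" "FSM_dedekind_infinite act X"
  shows "has_infinite_uniform_subset act X"
proof -
  obtain f :: "nat \<Rightarrow> _" where "inj f" "fs_fun triv_act UNIV act X f"
    using FSM_dedekind_infinite_imp_fs_inj_from_nat[OF assms] by blast
  then have "range f \<subseteq> X" "infinite (range f)" "uniformly_supported act (range f)"
    by (simp_all add: fs_fun_from_nat_iff range_inj_infinite)
  then show ?thesis
    by blast
qed

lemma infinite_uniform_subset_imp_FSM_dedekind_infinite:
  fixes X :: "'x set"
  assumes U: "SA_set act U" "X \<subseteq> U" and "fs_subset act X" and "has_infinite_uniform_subset act X"
  shows "FSM_dedekind_infinite act X"
proof -
  obtain Z where Z: "Z \<subseteq> X" "infinite Z" "uniformly_supported act Z"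
    using assms(4) by blast
  obtain f :: "nat \<Rightarrow> 'x" where "inj f" "range f \<subseteq> Z"
    using infinite_countable_subset[OF Z(2)] by blast
  moreover have "uniformly_supported act (range f)"
    using uniformly_supported_subset[OF Z(3) \<open>range f \<subseteq> Z\<close>] .
  ultimately have "fs_fun triv_act UNIV act X f"
    using Z(1) \<open>fs_subset act X\<close> by (auto simp: fs_fun_from_nat_iff)
  then show ?thesis
    by (rule fs_inj_from_nat_imp_FSM_dedekind_infinite[OF U \<open>inj f\<close>])
qed

lemma FSM_dedekind_infinite_iff_fs_inj_from_nat:
  fixes X :: "'x set"
  assumes "invariant_set act U" "X \<subseteq> U"
  shows "FSM_dedekind_infinite act X \<longleftrightarrow> (\<exists>f :: nat \<Rightarrow> 'x. inj f \<and> fs_fun triv_act UNIV act X f)"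
proof
  assume "FSM_dedekind_infinite act X"
  moreover have "\<forall>x\<in>X. fin_supp act x"
    using assms by (auto simp: invariant_set_def)
  ultimately show "\<exists>f :: nat \<Rightarrow> 'x. inj f \<and> fs_fun triv_act UNIV act X f"
    using FSM_dedekind_infinite_imp_fs_inj_from_nat by blast
next
  assume "\<exists>f :: nat \<Rightarrow> 'x. inj f \<and> fs_fun triv_act UNIV act X f"
  then obtain f :: "nat \<Rightarrow> 'x" where "inj f" "fs_fun triv_act UNIV act X f"
    by blast
  then show "FSM_dedekind_infinite act X"
    using fs_inj_from_nat_imp_FSM_dedekind_infinite assms by (auto simp: invariant_set_def)
qed

lemma FSM_dedekind_infinite_iff_infinite_uniform_subset:
  assumes "invariant_set act U" "X \<subseteq> U" "fs_subset act X"
  shows "FSM_dedekind_infinite act X \<longleftrightarrow> has_infinite_uniform_subset act X"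
proof
  have "\<forall>x\<in>X. fin_supp act x"
    using assms(1,2) by (auto simp: invariant_set_def)
  then show "has_infinite_uniform_subset act X" if "FSM_dedekind_infinite act X"
    using FSM_dedekind_infinite_imp_infinite_uniform_subset that by blast
  show "FSM_dedekind_infinite act X" if "has_infinite_uniform_subset act X"
    using infinite_uniform_subset_imp_FSM_dedekind_infinite[OF _ assms(2,3) that] assms(1)
    by (simp add: invariant_set_def)
qed

lemma fin_supp_prod_act:
  assumes "fin_supp actX x" "fin_supp actY y"
  shows "fin_supp (prod_act actX actY) (x, y)"
proof -
  obtain S T where "finite S" "supports actX S x" "finite T" "supports actY T y"
    using assms unfolding fin_supp_def by blast
  then have "finite (S \<union> T) \<and> supports (prod_act actX actY) (S \<union> T) (x, y)"
    unfolding supports_def prod_act_def by (simp add: Fix_Un)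
  then show ?thesis
    unfolding fin_supp_def by blast
qed

lemma fin_supp_sum_act_Inl: "fin_supp actX x \<Longrightarrow> fin_supp (sum_act actX actY) (Inl x)"
  unfolding fin_supp_def supports_def sum_act_def by simp

lemma fin_supp_sum_act_Inr: "fin_supp actY y \<Longrightarrow> fin_supp (sum_act actX actY) (Inr y)"
  unfolding fin_supp_def supports_def sum_act_def by simp

lemma uniformly_supported_fst_image:
  assumes "uniformly_supported (prod_act actX actY) Z"
  shows "uniformly_supported actX (fst ` Z)"
proof -
  obtain S where "finite S" "\<forall>z\<in>Z. \<forall>\<pi>\<in>Fix S. prod_act actX actY \<pi> z = z"
    using assms unfolding uniformly_supported_def supports_def by blast
  then show ?thesis
    unfolding uniformly_supported_def supports_def prod_act_def
    by (intro exI[of _ S]) (auto simp: prod_eq_iff)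
qed

lemma uniformly_supported_snd_image:
  assumes "uniformly_supported (prod_act actX actY) Z"
  shows "uniformly_supported actY (snd ` Z)"
proof -
  obtain S where "finite S" "\<forall>z\<in>Z. \<forall>\<pi>\<in>Fix S. prod_act actX actY \<pi> z = z"
    using assms unfolding uniformly_supported_def supports_def by blast
  then show ?thesis
    unfolding uniformly_supported_def supports_def prod_act_def
    by (intro exI[of _ S]) (auto simp: prod_eq_iff)
qed

lemma uniformly_supported_vimage_Inl:
  assumes "uniformly_supported (sum_act actX actY) Z"
  shows "uniformly_supported actX (Inl -` Z)"
proof -
  obtain S where "finite S" "\<forall>z\<in>Z. \<forall>\<pi>\<in>Fix S. sum_act actX actY \<pi> z = z"
    using assms unfolding uniformly_supported_def supports_def by blast
  then show ?thesis
    unfolding uniformly_supported_def supports_def sum_act_def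
    by (intro exI[of _ S]) force
qed

lemma uniformly_supported_vimage_Inr:
  assumes "uniformly_supported (sum_act actX actY) Z"
  shows "uniformly_supported actY (Inr -` Z)"
proof -
  obtain S where "finite S" "\<forall>z\<in>Z. \<forall>\<pi>\<in>Fix S. sum_act actX actY \<pi> z = z"
    using assms unfolding uniformly_supported_def supports_def by blast
  then show ?thesis
    unfolding uniformly_supported_def supports_def sum_act_def
    by (intro exI[of _ S]) force
qed

lemma has_infinite_uniform_subsetI:
  "Z \<subseteq> X \<Longrightarrow> infinite Z \<Longrightarrow> uniformly_supported act Z \<Longrightarrow> has_infinite_uniform_subset act X"
  by blast

lemma infinite_uniform_subset_Times:
  assumes "has_infinite_uniform_subset (prod_act actX actY) (X \<times> Y)"
  shows "has_infinite_uniform_subset actX X \<or> has_infinite_uniform_subset actY Y"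
proof -
  obtain Z where Z: "Z \<subseteq> X \<times> Y" "infinite Z" "uniformly_supported (prod_act actX actY) Z"
    using assms by blast
  have "infinite (fst ` Z) \<or> infinite (snd ` Z)"
    using Z(2) finite_subset[OF subset_fst_snd] finite_SigmaI by metis
  moreover have "fst ` Z \<subseteq> X" "snd ` Z \<subseteq> Y"
    using Z(1) by auto
  ultimately show ?thesis
    using has_infinite_uniform_subsetI uniformly_supported_fst_image[OF Z(3)]
      uniformly_supported_snd_image[OF Z(3)] by metis
qed

lemma infinite_uniform_subset_Plus:
  assumes "has_infinite_uniform_subset (sum_act actX actY) (X <+> Y)"
  shows "has_infinite_uniform_subset actX X \<or> has_infinite_uniform_subset actY Y"
proof -
  obtain Z where Z: "Z \<subseteq> X <+> Y" "infinite Z" "uniformly_supported (sum_act actX actY) Z"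
    using assms by blast
  have "Z \<subseteq> Inl -` Z <+> Inr -` Z"
  proof
    fix z assume "z \<in> Z"
    then show "z \<in> Inl -` Z <+> Inr -` Z"
      by (cases z) auto
  qed
  then have "infinite (Inl -` Z) \<or> infinite (Inr -` Z)"
    using Z(2) finite_subset finite_Plus by metis
  moreover have "Inl -` Z \<subseteq> X" "Inr -` Z \<subseteq> Y"
    using Z(1) by auto
  ultimately show ?thesis
    using has_infinite_uniform_subsetI uniformly_supported_vimage_Inl[OF Z(3)]
      uniformly_supported_vimage_Inr[OF Z(3)] by metis
qed

theorem mainTheorem9:
  fixes actX :: "('a \<Rightarrow> 'a) \<Rightarrow> 'x \<Rightarrow> 'x" and U :: "'x set" and X :: "'x set"
    and actY :: "('a \<Rightarrow> 'a) \<Rightarrow> 'y \<Rightarrow> 'y" and V :: "'y set" and Y :: "'y set"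
  assumes atoms_inf: "infinite (UNIV :: 'a set)"
    and U: "invariant_set actX U" and XU: "X \<subseteq> U" and Xfs: "fs_subset actX X"
    and V: "invariant_set actY V" and YV: "Y \<subseteq> V" and Yfs: "fs_subset actY Y"
  shows "(FSM_dedekind_infinite actX X \<longleftrightarrow>
            (\<exists>f :: nat \<Rightarrow> 'x. inj f \<and> fs_fun triv_act UNIV actX X f))
       \<and> ((\<nexists>Z. Z \<subseteq> X \<and> infinite Z \<and> uniformly_supported actX Z)
            \<longrightarrow> \<not> FSM_dedekind_infinite actX X)
       \<and> (\<not> FSM_dedekind_infinite actX X \<and> \<not> FSM_dedekind_infinite actY Y
            \<longrightarrow> \<not> FSM_dedekind_infinite (prod_act actX actY) (X \<times> Y))
       \<and> (\<not> FSM_dedekind_infinite actX X \<and> \<not> FSM_dedekind_infinite actY Y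
            \<longrightarrow> \<not> FSM_dedekind_infinite (sum_act actX actY) (X <+> Y))"
proof -
  have DI_X: "FSM_dedekind_infinite actX X \<longleftrightarrow> has_infinite_uniform_subset actX X"
    using FSM_dedekind_infinite_iff_infinite_uniform_subset[OF U XU Xfs] .
  have DI_Y: "FSM_dedekind_infinite actY Y \<longleftrightarrow> has_infinite_uniform_subset actY Y"
    using FSM_dedekind_infinite_iff_infinite_uniform_subset[OF V YV Yfs] .
  have finX: "\<forall>x\<in>X. fin_supp actX x" and finY: "\<forall>y\<in>Y. fin_supp actY y"
    using U XU V YV by (auto simp: invariant_set_def)
  then have fin_prod: "\<forall>p\<in>X \<times> Y. fin_supp (prod_act actX actY) p"
    and fin_sum: "\<forall>p\<in>X <+> Y. fin_supp (sum_act actX actY) p"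
    by (auto intro: fin_supp_prod_act fin_supp_sum_act_Inl fin_supp_sum_act_Inr)
  show ?thesis
  proof (intro conjI impI)
    show "FSM_dedekind_infinite actX X \<longleftrightarrow> (\<exists>f :: nat \<Rightarrow> 'x. inj f \<and> fs_fun triv_act UNIV actX X f)"
      using FSM_dedekind_infinite_iff_fs_inj_from_nat[OF U XU] .
    show "\<not> FSM_dedekind_infinite actX X" if "\<nexists>Z. Z \<subseteq> X \<and> infinite Z \<and> uniformly_supported actX Z"
      using that DI_X by simp
    assume "\<not> FSM_dedekind_infinite actX X \<and> \<not> FSM_dedekind_infinite actY Y"
    then have no_subset: "\<not> (has_infinite_uniform_subset actX X \<or> has_infinite_uniform_subset actY Y)"
      using DI_X DI_Y by simp
    show "\<not> FSM_dedekind_infinite (prod_act actX actY) (X \<times> Y)"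
      using no_subset infinite_uniform_subset_Times
        FSM_dedekind_infinite_imp_infinite_uniform_subset[OF fin_prod] by metis
    show "\<not> FSM_dedekind_infinite (sum_act actX actY) (X <+> Y)"
      using no_subset infinite_uniform_subset_Plus
        FSM_dedekind_infinite_imp_infinite_uniform_subset[OF fin_sum] by metis
  qed
qed

end
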